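(* For each $n=1,\ldots,N$ let $\mathbf{A}^{(n)}\in\mathbb{R}^{I_n\times R}$ be a random matrix with rows $\mathbf{a}^{(n)}_{i_n}\in\mathbb{R}^R$ (as column vectors), all entries having finite second moments. Assume the matrices $\mathbf{A}^{(1)},\ldots,\mathbf{A}^{(N)}$ are independent and that, for all $n$ and all $i_n$, the row vectors $\{\mathbf{a}^{(n)}_{i_n}\}$ are independent. Then $$\mathbb{E}\left[ \left\| [\![ \mathbf{A}^{(1)},\ldots, \mathbf{A}^{(N)} ]\!]\right\|_F^2 \right] = \sum_{i_1=1}^{I_1}\cdots\sum_{i_N=1}^{I_N} \left\langle \mathbb{E}\left[\mathbf{a}_{i_1}^{(1)}\mathbf{a}_{i_1}^{(1)T}\right],\ldots,\mathbb{E}\left[\mathbf{a}_{i_N}^{(N)}\mathbf{a}_{i_N}^{(N)T} \right]\right\rangle.$$ Moreover, letting $\mathbf{B}^{(n)}\in\mathbb{R}^{I_n\times R^2}$ be the matrix whose $i_n$th row is $\mathrm{vec}\left(\mathbb{E}\left[\mathbf{a}_{i_n}^{(n)}\mathbf{a}_{i_n}^{(n)T}\right]\right)^T$, we have $$\mathbb{E}\left[ \left\| [\![ \mathbf{A}^{(1)},\ldots, \mathbf{A}^{(N)} ]\!]\right\|_F^2 \right]=\mathbf{1}_{\prod_n I_n}^T \left(\bigodot_n \mathbf{B}^{(n)} \right)\mathbf{1}_{R^2},$$ where $\mathbf{1}_m$ denotes the all-ones vector of length $m$.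
   Context: The Kruskal operator $[\![ \mathbf{A}^{(1)},\ldots, \mathbf{A}^{(N)} ]\!]$ denotes the tensor $\sum_{r=1}^R \mathbf{a}^{(1)}_{\cdot r}\circ\cdots\circ\mathbf{a}^{(N)}_{\cdot r}\in\mathbb{R}^{I_1\times\cdots\times I_N}$, where $\mathbf{a}^{(n)}_{\cdot r}$ is the $r$th column of $\mathbf{A}^{(n)}$ and $\circ$ is the outer product; its $(i_1,\ldots,i_N)$ entry is $\sum_r\prod_n a^{(n)}_{i_n r}$. $\|\cdot\|_F$ is the Frobenius norm (square root of the sum of squares of all entries). The generalized inner product of $N$ matrices of the same size is $\langle\mathbf{M}^{(1)},\ldots,\mathbf{M}^{(N)}\rangle=\sum_{i,j}\prod_n M^{(n)}_{ij}$. $\mathrm{vec}$ stacks the columns of a matrix into a vector. For matrices with the same number of columns, $\mathbf{A}\odot\mathbf{B}$ is the Khatri–Rao (columnwise Kronecker) product and $\bigodot_n \mathbf{B}^{(n)} = \mathbf{B}^{(N)}\odot\cdots\odot\mathbf{B}^{(1)}$, of size $\prod_n I_n\times R^2$. *)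

theory Defs
  imports "HOL-Probability.Probability"
begin

text \<open>Matrices are represented as functions of (0-based) row and column indices.
  A family of factor matrices is U :: nat => nat => nat => real, with U n i r the
  (i,r) entry of the n-th factor matrix (size I n x R).\<close>

definition kruskal :: "nat \<Rightarrow> nat \<Rightarrow> (nat \<Rightarrow> nat \<Rightarrow> nat \<Rightarrow> real) \<Rightarrow> (nat \<Rightarrow> nat) \<Rightarrow> real" where
  "kruskal N R U idx = (\<Sum>r<R. \<Prod>n<N. U n (idx n) r)"

definition tensor_idx :: "nat \<Rightarrow> (nat \<Rightarrow> nat) \<Rightarrow> (nat \<Rightarrow> nat) set" where
  "tensor_idx N I = PiE {..<N} (\<lambda>n. {..<I n})"

definition frob_sq :: "nat \<Rightarrow> (nat \<Rightarrow> nat) \<Rightarrow> ((nat \<Rightarrow> nat) \<Rightarrow> real) \<Rightarrow> real" where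
  "frob_sq N I T = (\<Sum>idx\<in>tensor_idx N I. (T idx)^2)"

definition gen_inner :: "nat \<Rightarrow> nat \<Rightarrow> (nat \<Rightarrow> nat \<Rightarrow> nat \<Rightarrow> real) \<Rightarrow> real" where
  "gen_inner N R Ms = (\<Sum>i<R. \<Sum>j<R. \<Prod>n<N. Ms n i j)"

definition vec_mat :: "nat \<Rightarrow> (nat \<Rightarrow> nat \<Rightarrow> real) \<Rightarrow> nat \<Rightarrow> real" where
  "vec_mat m M k = M (k mod m) (k div m)"

text \<open>Khatri-Rao product A \<odot> B, where B has J rows: row i*J+j of the result is the
  elementwise product of row i of A and row j of B.\<close>
definition khatri_rao :: "nat \<Rightarrow> (nat \<Rightarrow> nat \<Rightarrow> real) \<Rightarrow> (nat \<Rightarrow> nat \<Rightarrow> real) \<Rightarrow> nat \<Rightarrow> nat \<Rightarrow> real" where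
  "khatri_rao J A B = (\<lambda>row k. A (row div J) k * B (row mod J) k)"

text \<open>kr_prod I B n = B (n-1) \<odot> ... \<odot> B 0 (B m has I m rows); kr_prod I B 0 is the
  1-row all-ones matrix (neutral element of the Khatri-Rao product).\<close>
fun kr_prod :: "(nat \<Rightarrow> nat) \<Rightarrow> (nat \<Rightarrow> nat \<Rightarrow> nat \<Rightarrow> real) \<Rightarrow> nat \<Rightarrow> nat \<Rightarrow> nat \<Rightarrow> real" where
  "kr_prod I B 0 = (\<lambda>_ _. 1)"
| "kr_prod I B (Suc n) = khatri_rao (\<Prod>m<n. I m) (B n) (kr_prod I B n)"

definition ones_form :: "nat \<Rightarrow> nat \<Rightarrow> (nat \<Rightarrow> nat \<Rightarrow> real) \<Rightarrow> real" where
  "ones_form p q M = (\<Sum>i<p. \<Sum>k<q. M i k)"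

end

theory Submission
  imports Defs
begin

text \<open>Expanding the square, the squared Frobenius norm is a sum over tensor indices and
  pairs of columns (r, s) of products with one factor a_{i_n r} a_{i_n s} per matrix.
  Independence of the matrices lets the expectation pass through each product, giving the
  generalized inner products of the second-moment matrices. After interchanging sums this is
  the sum over (r, s) of products of column sums of the B^(n), which is the sum of all entries
  of their Khatri-Rao product, because column sums of a Khatri-Rao product multiply.\<close>

lemma sum_lessThan_mult_div_mod:
  fixes g :: "nat \<Rightarrow> nat \<Rightarrow> 'b::comm_monoid_add"
  shows "(\<Sum>t<a * b. g (t div b) (t mod b)) = (\<Sum>i<a. \<Sum>j<b. g i j)"
proof (induction a)
  case 0
  then show ?case by simp
next
  case (Suc a)
  have "(\<Sum>t<Suc a * b. g (t div b) (t mod b)) =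
        (\<Sum>t<a * b. g (t div b) (t mod b)) + (\<Sum>t\<in>{a * b..<a * b + b}. g (t div b) (t mod b))"
    by (simp add: lessThan_atLeast0 sum.atLeastLessThan_concat add.commute)
  also have "(\<Sum>t\<in>{a * b..<a * b + b}. g (t div b) (t mod b))
      = (\<Sum>j\<in>{0..<b}. g ((j + a * b) div b) ((j + a * b) mod b))"
    using sum.shift_bounds_nat_ivl[of "\<lambda>t. g (t div b) (t mod b)" 0 "a * b" b]
    by (simp add: add.commute)
  also have "\<dots> = (\<Sum>j<b. g a j)"
    by (auto simp: lessThan_atLeast0 intro!: sum.cong)
  finally show ?case
    using Suc by simp
qed

lemma sum_kr_prod:
  "(\<Sum>t<(\<Prod>m<n. I m). kr_prod I B n t k) = (\<Prod>m<n. \<Sum>i<I m. B m i k)"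
proof (induction n)
  case 0
  then show ?case by simp
next
  case (Suc n)
  let ?J = "\<Prod>m<n. I m"
  have "(\<Sum>t<(\<Prod>m<Suc n. I m). kr_prod I B (Suc n) t k)
      = (\<Sum>t<I n * ?J. B n (t div ?J) k * kr_prod I B n (t mod ?J) k)"
    by (simp add: khatri_rao_def mult.commute)
  also have "\<dots> = (\<Sum>i<I n. \<Sum>j<?J. B n i k * kr_prod I B n j k)"
    by (rule sum_lessThan_mult_div_mod)
  also have "\<dots> = (\<Sum>i<I n. B n i k) * (\<Sum>j<?J. kr_prod I B n j k)"
    by (rule sum_product[symmetric])
  finally show ?case
    using Suc by (simp add: mult.commute)
qed

lemma ones_form_kr_prod_vec_mat:
  "ones_form (\<Prod>n<N. I n) (R^2) (kr_prod I (\<lambda>n i. vec_mat R (C n i)) N)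
     = (\<Sum>r<R. \<Sum>s<R. \<Prod>n<N. \<Sum>i<I n. C n i r s)"
proof -
  have "ones_form (\<Prod>n<N. I n) (R^2) (kr_prod I (\<lambda>n i. vec_mat R (C n i)) N)
      = (\<Sum>k<R * R. \<Prod>n<N. \<Sum>i<I n. C n i (k mod R) (k div R))"
    unfolding ones_form_def by (subst sum.swap) (simp add: sum_kr_prod vec_mat_def power2_eq_square)
  also have "\<dots> = (\<Sum>r<R. \<Sum>s<R. \<Prod>n<N. \<Sum>i<I n. C n i r s)"
    by (subst sum_lessThan_mult_div_mod) (rule sum.swap)
  finally show ?thesis .
qed

lemma sum_tensor_idx_gen_inner:
  "(\<Sum>idx\<in>tensor_idx N I. gen_inner N R (\<lambda>n. C n (idx n)))
     = (\<Sum>r<R. \<Sum>s<R. \<Prod>n<N. \<Sum>i<I n. C n i r s)"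
  unfolding gen_inner_def tensor_idx_def
  by (simp add: prod_sum_PiE) (subst sum.swap, rule sum.cong[OF refl], rule sum.swap)

lemma frob_sq_kruskal:
  "frob_sq N I (kruskal N R U)
     = (\<Sum>idx\<in>tensor_idx N I. gen_inner N R (\<lambda>n r s. U n (idx n) r * U n (idx n) s))"
  by (simp add: frob_sq_def kruskal_def gen_inner_def power2_eq_square sum_product prod.distrib)

lemma integrable_mult_of_square_integrable:
  fixes f g :: "'a \<Rightarrow> real"
  assumes "f \<in> borel_measurable M" "g \<in> borel_measurable M"
    and "integrable M (\<lambda>x. (f x)^2)" "integrable M (\<lambda>x. (g x)^2)"
  shows "integrable M (\<lambda>x. f x * g x)"
proof (rule Bochner_Integration.integrable_bound)
  show "integrable M (\<lambda>x. (f x)^2 + (g x)^2)"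
    using assms by auto
  have "\<bar>f x * g x\<bar> \<le> (f x)^2 + (g x)^2" for x
  proof -
    have "\<bar>f x * g x\<bar> \<le> 2 * \<bar>f x\<bar> * \<bar>g x\<bar>"
      by (simp add: abs_mult)
    also have "\<dots> \<le> (f x)^2 + (g x)^2"
      using sum_squares_bound[of "\<bar>f x\<bar>" "\<bar>g x\<bar>"] by simp
    finally show ?thesis .
  qed
  then show "AE x in M. norm (f x * g x) \<le> norm ((f x)^2 + (g x)^2)"
    by (auto intro: order.trans[OF _ abs_ge_self])
qed (use assms in auto)

lemma integral_triple_sum:
  fixes P :: "'i \<Rightarrow> 'j \<Rightarrow> 'k \<Rightarrow> 'a \<Rightarrow> 'b::{banach, second_countable_topology}"
  assumes "\<And>i j k. i \<in> I \<Longrightarrow> j \<in> J \<Longrightarrow> k \<in> K \<Longrightarrow> integrable M (P i j k)"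
  shows "(\<integral>x. (\<Sum>i\<in>I. \<Sum>j\<in>J. \<Sum>k\<in>K. P i j k x) \<partial>M)
      = (\<Sum>i\<in>I. \<Sum>j\<in>J. \<Sum>k\<in>K. \<integral>x. P i j k x \<partial>M)"
  by (subst Bochner_Integration.integral_sum, force intro: assms)
     (intro sum.cong refl, subst Bochner_Integration.integral_sum, force intro: assms,
      intro sum.cong refl, subst Bochner_Integration.integral_sum, auto intro: assms)

lemma (in prob_space) indep_vars_compose_integral_prod:
  fixes f :: "'i \<Rightarrow> 'b \<Rightarrow> real"
  assumes "finite J" "indep_vars M' X J"
    and "\<And>j. j \<in> J \<Longrightarrow> f j \<in> borel_measurable (M' j)"
    and "\<And>j. j \<in> J \<Longrightarrow> integrable M (\<lambda>\<omega>. f j (X j \<omega>))"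
  shows "integrable M (\<lambda>\<omega>. \<Prod>j\<in>J. f j (X j \<omega>))"
    and "(\<integral>\<omega>. (\<Prod>j\<in>J. f j (X j \<omega>)) \<partial>M) = (\<Prod>j\<in>J. \<integral>\<omega>. f j (X j \<omega>) \<partial>M)"
proof -
  have "indep_vars (\<lambda>_. borel) (\<lambda>j \<omega>. f j (X j \<omega>)) J"
    by (rule indep_vars_compose2[OF assms(2)]) (rule assms(3))
  then show "integrable M (\<lambda>\<omega>. \<Prod>j\<in>J. f j (X j \<omega>))"
    and "(\<integral>\<omega>. (\<Prod>j\<in>J. f j (X j \<omega>)) \<partial>M) = (\<Prod>j\<in>J. \<integral>\<omega>. f j (X j \<omega>) \<partial>M)"
    using indep_vars_integrable indep_vars_lebesgue_integral assms(1,4) by auto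
qed

lemma (in prob_space) expectation_frob_sq_kruskal:
  fixes A :: "nat \<Rightarrow> nat \<Rightarrow> nat \<Rightarrow> 'a \<Rightarrow> real"
  assumes meas: "\<And>n i r. n < N \<Longrightarrow> i < I n \<Longrightarrow> r < R \<Longrightarrow> A n i r \<in> borel_measurable M"
    and sq: "\<And>n i r. n < N \<Longrightarrow> i < I n \<Longrightarrow> r < R \<Longrightarrow> integrable M (\<lambda>\<omega>. (A n i r \<omega>)^2)"
    and indep: "indep_vars (\<lambda>n. PiM ({..<I n} \<times> {..<R}) (\<lambda>_. borel))
        (\<lambda>n \<omega>. \<lambda>(i, r)\<in>{..<I n} \<times> {..<R}. A n i r \<omega>) {..<N}"
  shows "(\<integral>\<omega>. frob_sq N I (kruskal N R (\<lambda>n i r. A n i r \<omega>)) \<partial>M)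
     = (\<Sum>idx\<in>tensor_idx N I. gen_inner N R (\<lambda>n r s. \<integral>\<omega>. A n (idx n) r \<omega> * A n (idx n) s \<omega> \<partial>M))"
proof -
  let ?P = "\<lambda>idx r s \<omega>. \<Prod>n<N. A n (idx n) r \<omega> * A n (idx n) s \<omega>"
  have moment: "integrable M (?P idx r s)"
      "(\<integral>\<omega>. ?P idx r s \<omega> \<partial>M) = (\<Prod>n<N. \<integral>\<omega>. A n (idx n) r \<omega> * A n (idx n) s \<omega> \<partial>M)"
    if idx: "idx \<in> tensor_idx N I" and "r < R" "s < R" for idx r s
  proof -
    let ?f = "\<lambda>n F. F (idx n, r) * F (idx n, s) :: real"
    have entries: "(idx n, r) \<in> {..<I n} \<times> {..<R}" "(idx n, s) \<in> {..<I n} \<times> {..<R}"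
      if "n < N" for n
      using idx that \<open>r < R\<close> \<open>s < R\<close> by (auto simp: tensor_idx_def PiE_def Pi_def)
    have "?f n \<in> borel_measurable (PiM ({..<I n} \<times> {..<R}) (\<lambda>_. borel))" if "n < N" for n
      using entries[OF that]
      by (intro borel_measurable_times) (auto intro: measurable_component_singleton)
    moreover have "integrable M (\<lambda>\<omega>. A n (idx n) r \<omega> * A n (idx n) s \<omega>)" if "n < N" for n
      using entries[OF that] meas sq that by (auto intro: integrable_mult_of_square_integrable)
    ultimately show "integrable M (?P idx r s)"
      "(\<integral>\<omega>. ?P idx r s \<omega> \<partial>M) = (\<Prod>n<N. \<integral>\<omega>. A n (idx n) r \<omega> * A n (idx n) s \<omega> \<partial>M)"
      using indep_vars_compose_integral_prod[OF _ indep, of ?f] entries by auto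
  qed
  have "(\<integral>\<omega>. (\<Sum>idx\<in>tensor_idx N I. \<Sum>r<R. \<Sum>s<R. ?P idx r s \<omega>) \<partial>M)
      = (\<Sum>idx\<in>tensor_idx N I. \<Sum>r<R. \<Sum>s<R. \<integral>\<omega>. ?P idx r s \<omega> \<partial>M)"
    by (rule integral_triple_sum) (simp add: moment(1))
  then show ?thesis
    unfolding frob_sq_kruskal gen_inner_def by (simp add: moment(2))
qed

theorem theorem3:
  fixes M :: "'a measure" and N R :: nat and I :: "nat \<Rightarrow> nat"
    and A :: "nat \<Rightarrow> nat \<Rightarrow> nat \<Rightarrow> 'a \<Rightarrow> real"
  assumes P: "prob_space M"
    and meas: "\<And>n i r. n < N \<Longrightarrow> i < I n \<Longrightarrow> r < R \<Longrightarrow> A n i r \<in> borel_measurable M"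
    and sq: "\<And>n i r. n < N \<Longrightarrow> i < I n \<Longrightarrow> r < R \<Longrightarrow> integrable M (\<lambda>\<omega>. (A n i r \<omega>)^2)"
    and indep_mats: "prob_space.indep_vars M
        (\<lambda>n. PiM ({..<I n} \<times> {..<R}) (\<lambda>_. borel))
        (\<lambda>n \<omega>. \<lambda>(i, r)\<in>{..<I n} \<times> {..<R}. A n i r \<omega>) {..<N}"
    and indep_rows: "\<And>n. n < N \<Longrightarrow> prob_space.indep_vars M
        (\<lambda>_. PiM {..<R} (\<lambda>_. borel))
        (\<lambda>i \<omega>. \<lambda>r\<in>{..<R}. A n i r \<omega>) {..<I n}"
  shows "(\<integral>\<omega>. frob_sq N I (kruskal N R (\<lambda>n i r. A n i r \<omega>)) \<partial>M)
           = (\<Sum>idx\<in>tensor_idx N I.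
                gen_inner N R (\<lambda>n r s. \<integral>\<omega>. A n (idx n) r \<omega> * A n (idx n) s \<omega> \<partial>M))
       \<and> (\<integral>\<omega>. frob_sq N I (kruskal N R (\<lambda>n i r. A n i r \<omega>)) \<partial>M)
           = ones_form (\<Prod>n<N. I n) (R^2)
               (kr_prod I (\<lambda>n i. vec_mat R (\<lambda>r s. \<integral>\<omega>. A n i r \<omega> * A n i s \<omega> \<partial>M)) N)"
proof -
  interpret prob_space M by (rule P)
  have E: "(\<integral>\<omega>. frob_sq N I (kruskal N R (\<lambda>n i r. A n i r \<omega>)) \<partial>M)
      = (\<Sum>idx\<in>tensor_idx N I.
           gen_inner N R (\<lambda>n r s. \<integral>\<omega>. A n (idx n) r \<omega> * A n (idx n) s \<omega> \<partial>M))"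
    using expectation_frob_sq_kruskal[OF meas sq indep_mats] .
  then show ?thesis
    using sum_tensor_idx_gen_inner[where C="\<lambda>n i r s. \<integral>\<omega>. A n i r \<omega> * A n i s \<omega> \<partial>M"]
    by (simp add: ones_form_kr_prod_vec_mat)
qed

end
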